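(* The matrices $\hat U(\gamma_* )=[u_1(\gamma_* )\ \ u_2(\gamma_* )-\theta_*u_1(\gamma_* )]$ and $\hat V(\gamma_* )=[v_1(\gamma_* )\ \ v_2(\gamma_* )-\theta_*v_1(\gamma_* )]$, where $\theta_*=\frac{\gamma_*}{\mu_1-\mu_2}$, satisfy $\hat U(\gamma_* )^*\hat U(\gamma_* )=\hat V(\gamma_* )^*\hat V(\gamma_* )$.
   Context: Let $P(\lambda)=\sum_{j=0}^m A_j\lambda^j$ be an $n\times n$ matrix polynomial with $\det A_m\neq0$, let $\mu_1\neq\mu_2$ be complex numbers, $P[\mu_1,\mu_2]=\frac{P(\mu_1)-P(\mu_2)}{\mu_1-\mu_2}$, and $F[P(\mu_1,\mu_2);\gamma]=\begin{bmatrix} P(\mu_1) & 0\\ \gamma P[\mu_1,\mu_2] & P(\mu_2)\end{bmatrix}$. Assume $\mathrm{rank}(P[\mu_1,\mu_2])\ge2$, let $\gamma_*>0$ be a point where $s_{2n-1}(F[P(\mu_1,\mu_2);\gamma])$ attains its maximum $s_*>0$ over $\gamma\ge0$. Let $\begin{bmatrix} u_1(\gamma_* )\\ u_2(\gamma_* )\end{bmatrix},\begin{bmatrix} v_1(\gamma_* )\\ v_2(\gamma_* )\end{bmatrix}$ ($u_k,v_k\in\mathbb{C}^n$) be a pair of left and right singular vectors of $s_*$ chosen such that $u_2(\gamma_* )^*P[\mu_1,\mu_2]v_1(\gamma_* )=0$, $u_2(\gamma_* )^*u_1(\gamma_* )=v_2(\gamma_* )^*v_1(\gamma_* )$, and $[u_1(\gamma_*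 )\ u_2(\gamma_* )]^*[u_1(\gamma_* )\ u_2(\gamma_* )]=[v_1(\gamma_* )\ v_2(\gamma_* )]^*[v_1(\gamma_* )\ v_2(\gamma_* )]$ (such a pair exists). *)

theory Defs
  imports "Jordan_Normal_Form.Schur_Decomposition" "Jordan_Normal_Form.DL_Rank"
    "HOL-Computational_Algebra.Polynomial"
begin

definition mpoly_eval :: "nat \<Rightarrow> nat \<Rightarrow> (nat \<Rightarrow> complex mat) \<Rightarrow> complex \<Rightarrow> complex mat" where
  "mpoly_eval n m A lam = mat n n (\<lambda>(i,k). \<Sum>j\<le>m. lam ^ j * (A j $$ (i,k)))"

definition mpoly_divdiff :: "nat \<Rightarrow> nat \<Rightarrow> (nat \<Rightarrow> complex mat) \<Rightarrow> complex \<Rightarrow> complex \<Rightarrow> complex mat" where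
  "mpoly_divdiff n m A mu1 mu2 =
     (1 / (mu1 - mu2)) \<cdot>\<^sub>m (mpoly_eval n m A mu1 - mpoly_eval n m A mu2)"

definition Fmat :: "nat \<Rightarrow> nat \<Rightarrow> (nat \<Rightarrow> complex mat) \<Rightarrow> complex \<Rightarrow> complex \<Rightarrow> real \<Rightarrow> complex mat" where
  "Fmat n m A mu1 mu2 gamma =
     four_block_mat (mpoly_eval n m A mu1) (0\<^sub>m n n)
       (complex_of_real gamma \<cdot>\<^sub>m mpoly_divdiff n m A mu1 mu2) (mpoly_eval n m A mu2)"

text \<open>Singular values of M in nonincreasing order: square roots of the eigenvalues
  (with algebraic multiplicity) of M^* M.  sing_val k M is s_k(M), 1-based.\<close>
definition sing_vals :: "complex mat \<Rightarrow> real list" where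
  "sing_vals M = rev (sorted_list_of_multiset
     (image_mset (\<lambda>z. sqrt (Re z)) (proots (char_poly (mat_adjoint M * M)))))"

definition sing_val :: "nat \<Rightarrow> complex mat \<Rightarrow> real" where
  "sing_val k M = sing_vals M ! (k - 1)"

definition sing_vec_pair :: "complex mat \<Rightarrow> real \<Rightarrow> complex vec \<Rightarrow> complex vec \<Rightarrow> bool" where
  "sing_vec_pair M s u v \<longleftrightarrow>
     u \<in> carrier_vec (dim_row M) \<and> v \<in> carrier_vec (dim_col M) \<and>
     u \<bullet>c u = 1 \<and> v \<bullet>c v = 1 \<and>
     M *\<^sub>v v = complex_of_real s \<cdot>\<^sub>v u \<and> mat_adjoint M *\<^sub>v u = complex_of_real s \<cdot>\<^sub>v v"

end

theory Submission
  imports Defs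
begin

text \<open>Right multiplication by the shear \<open>E = [[1, -\<theta>], [0, 1]]\<close> turns \<open>[u\<^sub>1 u\<^sub>2]\<close> into
  \<open>\<hat>U\<close> and \<open>[v\<^sub>1 v\<^sub>2]\<close> into \<open>\<hat>V\<close>. By sesquilinearity every entry of \<open>\<hat>U\<^sup>* \<hat>U\<close> is
  the same fixed combination of the entries of \<open>[u\<^sub>1 u\<^sub>2]\<^sup>* [u\<^sub>1 u\<^sub>2]\<close> as the
  corresponding entry of \<open>\<hat>V\<^sup>* \<hat>V\<close> is of \<open>[v\<^sub>1 v\<^sub>2]\<^sup>* [v\<^sub>1 v\<^sub>2]\<close>, so the assumed
  equality of these two Gram matrices carries over.\<close>

lemma cscalar_prod_diff_smult_left:
  assumes "x \<in> carrier_vec n" "y \<in> carrier_vec n" "z \<in> carrier_vec n"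
  shows "(x - (c::complex) \<cdot>\<^sub>v y) \<bullet>c z = x \<bullet>c z - c * (y \<bullet>c z)"
  using assms by (simp add: scalar_prod_def sum_subtractf sum_distrib_left algebra_simps)

lemma cscalar_prod_diff_smult_right:
  assumes "x \<in> carrier_vec n" "y \<in> carrier_vec n" "z \<in> carrier_vec n"
  shows "z \<bullet>c (x - (c::complex) \<cdot>\<^sub>v y) = z \<bullet>c x - cnj c * (z \<bullet>c y)"
  using assms by (simp add: scalar_prod_def sum_subtractf sum_distrib_left algebra_simps)

lemma gram_mat_index:
  fixes A :: "'a :: conjugatable_field mat"
  assumes "i < dim_col A" "j < dim_col A"
  shows "(mat_adjoint A * A) $$ (i, j) = col A j \<bullet>c col A i"
  using assms by (simp add: mat_adjoint_def conjugate_vec_sprod_comm[of _ "dim_row A"])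

lemma gram_mat_eq_iff:
  fixes A B :: "'a :: conjugatable_field mat"
  assumes "dim_col A = k" "dim_col B = k"
  shows "mat_adjoint A * A = mat_adjoint B * B \<longleftrightarrow>
    (\<forall>i<k. \<forall>j<k. col A i \<bullet>c col A j = col B i \<bullet>c col B j)"
proof
  assume "mat_adjoint A * A = mat_adjoint B * B"
  then show "\<forall>i<k. \<forall>j<k. col A i \<bullet>c col A j = col B i \<bullet>c col B j"
    using assms by (metis gram_mat_index)
next
  assume cols_eq: "\<forall>i<k. \<forall>j<k. col A i \<bullet>c col A j = col B i \<bullet>c col B j"
  show "mat_adjoint A * A = mat_adjoint B * B"
  proof (rule eq_matI)
    fix i j assume "i < dim_row (mat_adjoint B * B)" "j < dim_col (mat_adjoint B * B)"
    then have "i < k" "j < k" using assms by (simp_all add: mat_adjoint_def)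
    then show "(mat_adjoint A * A) $$ (i, j) = (mat_adjoint B * B) $$ (i, j)"
      using assms cols_eq by (simp add: gram_mat_index)
  qed (use assms in \<open>simp_all add: mat_adjoint_def\<close>)
qed

lemma gram_mat_of_cols_eq_iff:
  fixes vs ws :: "'a :: conjugatable_field vec list"
  assumes "set vs \<subseteq> carrier_vec n" "set ws \<subseteq> carrier_vec m" "length ws = length vs"
  shows "mat_adjoint (mat_of_cols n vs) * mat_of_cols n vs
      = mat_adjoint (mat_of_cols m ws) * mat_of_cols m ws \<longleftrightarrow>
    (\<forall>i<length vs. \<forall>j<length vs. vs ! i \<bullet>c vs ! j = ws ! i \<bullet>c ws ! j)"
  using assms by (simp add: gram_mat_eq_iff[where k = "length vs"] subset_code(1))

lemma gram_mat_of_cols_shear_eq: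
  fixes a b c d :: "complex vec"
  assumes carrier: "a \<in> carrier_vec n" "b \<in> carrier_vec n" "c \<in> carrier_vec n" "d \<in> carrier_vec n"
    and gram_eq: "mat_adjoint (mat_of_cols n [a, b]) * mat_of_cols n [a, b]
      = mat_adjoint (mat_of_cols n [c, d]) * mat_of_cols n [c, d]"
  shows "mat_adjoint (mat_of_cols n [a, b - t \<cdot>\<^sub>v a]) * mat_of_cols n [a, b - t \<cdot>\<^sub>v a]
    = mat_adjoint (mat_of_cols n [c, d - t \<cdot>\<^sub>v c]) * mat_of_cols n [c, d - t \<cdot>\<^sub>v c]"
proof -
  have "\<forall>i<2. \<forall>j<2. [a, b] ! i \<bullet>c [a, b] ! j = [c, d] ! i \<bullet>c [c, d] ! j"
    using gram_eq carrier by (subst (asm) gram_mat_of_cols_eq_iff) simp_all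
  then have "a \<bullet>c a = c \<bullet>c c" "a \<bullet>c b = c \<bullet>c d" "b \<bullet>c a = d \<bullet>c c" "b \<bullet>c b = d \<bullet>c d"
    by (simp_all add: numeral_2_eq_2 All_less_Suc)
  then have "\<forall>i<2. \<forall>j<2. [a, b - t \<cdot>\<^sub>v a] ! i \<bullet>c [a, b - t \<cdot>\<^sub>v a] ! j
      = [c, d - t \<cdot>\<^sub>v c] ! i \<bullet>c [c, d - t \<cdot>\<^sub>v c] ! j"
    using carrier
    by (simp add: numeral_2_eq_2 All_less_Suc cscalar_prod_diff_smult_left cscalar_prod_diff_smult_right)
  then show ?thesis
    using carrier by (subst gram_mat_of_cols_eq_iff) simp_all
qed

theorem corollary1:
  fixes n m :: nat and A :: "nat \<Rightarrow> complex mat" and mu1 mu2 :: complex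
    and gamma_s s_s :: real and u v :: "complex vec"
  assumes A_dim: "\<forall>j\<le>m. A j \<in> carrier_mat n n"
    and A_lead: "det (A m) \<noteq> 0"
    and mu_ne: "mu1 \<noteq> mu2"
    and rank2: "vec_space.rank n (mpoly_divdiff n m A mu1 mu2) \<ge> 2"
    and gamma_pos: "gamma_s > 0"
    and s_def: "s_s = sing_val (2*n - 1) (Fmat n m A mu1 mu2 gamma_s)"
    and s_max: "\<forall>gamma\<ge>0. sing_val (2*n - 1) (Fmat n m A mu1 mu2 gamma) \<le> s_s"
    and s_pos: "s_s > 0"
    and sv: "sing_vec_pair (Fmat n m A mu1 mu2 gamma_s) s_s u v"
    and c1: "(mpoly_divdiff n m A mu1 mu2 *\<^sub>v vec_first v n) \<bullet>c vec_last u n = 0"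
    and c2: "vec_first u n \<bullet>c vec_last u n = vec_first v n \<bullet>c vec_last v n"
    and c3: "mat_adjoint (mat_of_cols n [vec_first u n, vec_last u n])
               * mat_of_cols n [vec_first u n, vec_last u n]
           = mat_adjoint (mat_of_cols n [vec_first v n, vec_last v n])
               * mat_of_cols n [vec_first v n, vec_last v n]"
  shows "let theta = complex_of_real gamma_s / (mu1 - mu2);
             Uh = mat_of_cols n [vec_first u n, vec_last u n - theta \<cdot>\<^sub>v vec_first u n];
             Vh = mat_of_cols n [vec_first v n, vec_last v n - theta \<cdot>\<^sub>v vec_first v n]
         in mat_adjoint Uh * Uh = mat_adjoint Vh * Vh"
  unfolding Let_def by (rule gram_mat_of_cols_shear_eq[OF _ _ _ _ c3]) auto

end
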